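(* Let $R=\bigoplus_{s\in S}R_s$ be an $S$-graded ring inducing $S$ with $S$ cancellative. If $R$ is graded von Neumann regular, then the ring $R_e$ is von Neumann regular for every idempotent $e\in S$.
   Context: Rings are associative, not necessarily unital. $S$-graded ring inducing $S$: $S$ a partial groupoid, $R=\bigoplus_{s\in S}R_s$ with additive subgroups $R_s$, $R_sR_t\subseteq R_{st}$ when $st$ is defined, and $R_sR_t\neq0$ implies $st$ is defined. Convention: $0\in S$, $R_0=0$, $S\setminus\{0\}=\{s:R_s\ne0\}$, undefined products in $S$ set to $0$, $0$ absorbing. Homogeneous elements: $H_R=\bigcup_s R_s$. $S$ is cancellative if $0\ne su=tu$ or $0\ne us=ut$ implies $s=t$. $R$ is graded von Neumann regular if $x\in xRx$ for all $x\in H_R$. For an idempotent $e$ of $S$, $R_e$ is a subring. *)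

theory Defs
  imports Main
begin

text \<open>The paper's adjoined absorbing
  zero is not part of the carrier: "st = 0" in the paper means "m s t = None" here.
  Rings are modelled by the type class ring (associative, not necessarily unital).\<close>

definition partial_groupoid :: "'s set \<Rightarrow> ('s \<Rightarrow> 's \<Rightarrow> 's option) \<Rightarrow> bool" where
  "partial_groupoid S m \<longleftrightarrow> (\<forall>s\<in>S. \<forall>t\<in>S. \<forall>u. m s t = Some u \<longrightarrow> u \<in> S)"

definition additive_subgroup :: "'r::ring set \<Rightarrow> bool" where
  "additive_subgroup A \<longleftrightarrow> 0 \<in> A \<and> (\<forall>a\<in>A. \<forall>b\<in>A. a + b \<in> A) \<and> (\<forall>a\<in>A. - a \<in> A)"

definition graded_ring_inducing ::
  "'s set \<Rightarrow> ('s \<Rightarrow> 's \<Rightarrow> 's option) \<Rightarrow> ('s \<Rightarrow> 'r::ring set) \<Rightarrow> bool" where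
  "graded_ring_inducing S m Rg \<longleftrightarrow>
     partial_groupoid S m \<and>
     (\<forall>s\<in>S. additive_subgroup (Rg s)) \<and>
     (\<forall>s\<in>S. Rg s \<noteq> {0}) \<and>
     (\<forall>x::'r. \<exists>!f::'s \<Rightarrow> 'r. (\<forall>s. s \<notin> S \<longrightarrow> f s = 0) \<and> finite {s. f s \<noteq> 0} \<and>
                   (\<forall>s\<in>S. f s \<in> Rg s) \<and> x = (\<Sum>s\<in>{s. f s \<noteq> 0}. f s)) \<and>
     (\<forall>s\<in>S. \<forall>t\<in>S. \<forall>u. m s t = Some u \<longrightarrow> (\<forall>a\<in>Rg s. \<forall>b\<in>Rg t. a * b \<in> Rg u)) \<and>
     (\<forall>s\<in>S. \<forall>t\<in>S. (\<exists>a\<in>Rg s. \<exists>b\<in>Rg t. a * b \<noteq> 0) \<longrightarrow> m s t \<noteq> None)"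

definition cancellative :: "'s set \<Rightarrow> ('s \<Rightarrow> 's \<Rightarrow> 's option) \<Rightarrow> bool" where
  "cancellative S m \<longleftrightarrow>
     (\<forall>s\<in>S. \<forall>t\<in>S. \<forall>u\<in>S. \<forall>v.
        (m s u = Some v \<and> m t u = Some v \<longrightarrow> s = t) \<and>
        (m u s = Some v \<and> m u t = Some v \<longrightarrow> s = t))"

definition idempotent_in :: "'s set \<Rightarrow> ('s \<Rightarrow> 's \<Rightarrow> 's option) \<Rightarrow> 's \<Rightarrow> bool" where
  "idempotent_in S m e \<longleftrightarrow> e \<in> S \<and> m e e = Some e"

definition graded_vNr :: "'s set \<Rightarrow> ('s \<Rightarrow> 'r::ring set) \<Rightarrow> bool" where
  "graded_vNr S Rg \<longleftrightarrow> (\<forall>s\<in>S. \<forall>x\<in>Rg s. \<exists>y::'r. x = x * y * x)"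

definition vNr_subring :: "'r::ring set \<Rightarrow> bool" where
  "vNr_subring A \<longleftrightarrow> (\<forall>x\<in>A. \<exists>y\<in>A. x = x * y * x)"

end

theory Submission
  imports Defs
begin

text \<open>For x in R_e choose y with x = x y x and split y into homogeneous components y_s.
  Each x y_s x lies in R_{e s e} (or vanishes), and by cancellativity e s e = e forces s = e.
  Taking the e-component of x = \<Sum>_s x y_s x therefore gives x = x y_e x with y_e in R_e.\<close>

lemma cancellative_idempotent_sandwich:
  assumes "cancellative S m" and "e \<in> S" "s \<in> S" "t \<in> S"
    and "m e e = Some e" "m e s = Some t" "m t e = Some e"
  shows "s = e"
proof -
  have "t = e" using assms(1,2,4,5,7) unfolding cancellative_def by blast
  then show "s = e" using assms(1,2,3,5,6) unfolding cancellative_def by blast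
qed

locale graded_ring =
  fixes S :: "'s set" and m :: "'s \<Rightarrow> 's \<Rightarrow> 's option" and Rg :: "'s \<Rightarrow> 'r::ring set"
  assumes graded: "graded_ring_inducing S m Rg"
begin

definition decomposition :: "'r \<Rightarrow> ('s \<Rightarrow> 'r) \<Rightarrow> bool" where
  "decomposition x f \<longleftrightarrow> (\<forall>s. s \<notin> S \<longrightarrow> f s = 0) \<and> finite {s. f s \<noteq> 0} \<and>
     (\<forall>s\<in>S. f s \<in> Rg s) \<and> x = (\<Sum>s\<in>{s. f s \<noteq> 0}. f s)"

definition component :: "'s \<Rightarrow> 'r \<Rightarrow> 'r" where
  "component e x = (THE f. decomposition x f) e"

lemma decomposition_ex1: "\<exists>!f. decomposition x f"
proof -
  have "\<forall>x. \<exists>!f. decomposition x f"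
    using graded unfolding graded_ring_inducing_def decomposition_def by (elim conjE)
  then show ?thesis ..
qed

lemma component_eq:
  assumes "decomposition x f"
  shows "component e x = f e"
proof -
  have "(THE f. decomposition x f) = f"
    by (rule the1_equality) (fact decomposition_ex1, fact assms)
  then show ?thesis unfolding component_def by simp
qed

lemma decomposition_component: "decomposition x (\<lambda>s. component s x)"
proof -
  obtain f where f: "decomposition x f" using decomposition_ex1 by blast
  then have "(\<lambda>s. component s x) = f" using component_eq by blast
  with f show ?thesis by simp
qed

lemma component_mem:
  assumes "e \<in> S"
  shows "component e x \<in> Rg e"
  using decomposition_component[of x] assms unfolding decomposition_def by blast

lemma zero_mem: "s \<in> S \<Longrightarrow> 0 \<in> Rg s"
  using graded unfolding graded_ring_inducing_def additive_subgroup_def by blast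

lemma add_mem: "s \<in> S \<Longrightarrow> a \<in> Rg s \<Longrightarrow> b \<in> Rg s \<Longrightarrow> a + b \<in> Rg s"
  using graded unfolding graded_ring_inducing_def additive_subgroup_def by blast

lemma decomposition_add:
  assumes a: "decomposition a fa" and b: "decomposition b fb"
  shows "decomposition (a + b) (\<lambda>s. fa s + fb s)"
proof -
  let ?A = "{s. fa s \<noteq> 0}" and ?B = "{s. fb s \<noteq> 0}" and ?C = "{s. fa s + fb s \<noteq> 0}"
  have fin: "finite (?A \<union> ?B)" using a b unfolding decomposition_def by simp
  have sub: "?C \<subseteq> ?A \<union> ?B" by auto
  have "(\<Sum>s\<in>?C. fa s + fb s) = (\<Sum>s\<in>?A \<union> ?B. fa s + fb s)"
    by (rule sum.mono_neutral_left[OF fin sub]) auto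
  also have "\<dots> = (\<Sum>s\<in>?A \<union> ?B. fa s) + (\<Sum>s\<in>?A \<union> ?B. fb s)"
    by (rule sum.distrib)
  also have "(\<Sum>s\<in>?A \<union> ?B. fa s) = (\<Sum>s\<in>?A. fa s)"
    by (rule sum.mono_neutral_right[OF fin]) auto
  also have "(\<Sum>s\<in>?A \<union> ?B. fb s) = (\<Sum>s\<in>?B. fb s)"
    by (rule sum.mono_neutral_right[OF fin]) auto
  finally have "(\<Sum>s\<in>?C. fa s + fb s) = a + b"
    using a b unfolding decomposition_def by simp
  moreover have "\<forall>s\<in>S. fa s + fb s \<in> Rg s"
    using a b add_mem unfolding decomposition_def by blast
  ultimately show ?thesis
    using a b finite_subset[OF sub fin] unfolding decomposition_def by simp
qed

lemma component_add: "component e (a + b) = component e a + component e b"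
  using component_eq[OF decomposition_add[OF decomposition_component decomposition_component]]
  by simp

lemma component_zero: "component e 0 = 0"
  using component_add[of e 0 0] by simp

lemma component_sum: "component e (\<Sum>s\<in>F. g s) = (\<Sum>s\<in>F. component e (g s))"
  by (induction F rule: infinite_finite_induct) (simp_all add: component_zero component_add)

lemma component_homogeneous:
  assumes "u \<in> S" and "z \<in> Rg u"
  shows "component e z = (if e = u then z else 0)"
proof (rule component_eq)
  have "{s. (if s = u then z else 0) \<noteq> 0} = (if z = 0 then {} else {u})" by auto
  then show "decomposition z (\<lambda>s. if s = u then z else 0)"
    using assms zero_mem unfolding decomposition_def by auto
qed

lemma mult_homogeneous:
  assumes "s \<in> S" "t \<in> S" "a \<in> Rg s" "b \<in> Rg t" and "a * b \<noteq> 0"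
  obtains u where "m s t = Some u" "u \<in> S" "a * b \<in> Rg u"
proof -
  have "m s t \<noteq> None"
    using assms graded unfolding graded_ring_inducing_def by blast
  then obtain u where u: "m s t = Some u" by blast
  moreover have "u \<in> S"
    using u assms(1,2) graded unfolding graded_ring_inducing_def partial_groupoid_def by blast
  moreover have "a * b \<in> Rg u"
    using u assms(1-4) graded unfolding graded_ring_inducing_def by blast
  ultimately show ?thesis using that by blast
qed

lemma component_sandwich_homogeneous:
  assumes "cancellative S m" and "idempotent_in S m e"
    and x: "x \<in> Rg e" and s: "s \<in> S" "b \<in> Rg s"
  shows "component e (x * b * x) = (if s = e then x * b * x else 0)"
proof (cases "x * b * x = 0")
  case True
  then show ?thesis by (simp add: component_zero)
next
  case False
  have e: "e \<in> S" "m e e = Some e" using assms(2) unfolding idempotent_in_def by simp_all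
  from False have "x * b \<noteq> 0" by auto
  then obtain t where t: "m e s = Some t" "t \<in> S" "x * b \<in> Rg t"
    using mult_homogeneous e(1) s x by metis
  obtain u where u: "m t e = Some u" "u \<in> S" "x * b * x \<in> Rg u"
    using mult_homogeneous[OF t(2) e(1) t(3) x False] by metis
  have "u = e \<longleftrightarrow> s = e"
    using cancellative_idempotent_sandwich[OF assms(1) e(1) s(1) t(2) e(2) t(1)] t(1) u(1) e(2)
    by auto
  then show ?thesis using component_homogeneous[OF u(2,3)] by auto
qed

lemma component_sandwich:
  assumes "cancellative S m" and "idempotent_in S m e" and x: "x \<in> Rg e"
  shows "component e (x * a * x) = x * component e a * x"
proof -
  obtain f where f: "decomposition a f" using decomposition_ex1 by blast
  let ?F = "{s. f s \<noteq> 0}"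
  have component_term: "component e (x * f s * x) = (if s = e then x * f s * x else 0)"
    if "s \<in> ?F" for s
  proof -
    have "s \<in> S" using that f unfolding decomposition_def by auto
    with f show ?thesis
      using component_sandwich_homogeneous[OF assms] unfolding decomposition_def by blast
  qed
  have "x * a * x = (\<Sum>s\<in>?F. x * f s * x)"
    using f unfolding decomposition_def by (simp add: sum_distrib_left sum_distrib_right)
  then have "component e (x * a * x) = (\<Sum>s\<in>?F. if s = e then x * f s * x else 0)"
    by (simp add: component_sum component_term)
  also have "\<dots> = x * f e * x"
    using f unfolding decomposition_def by (auto simp: sum.delta)
  finally show ?thesis using component_eq[OF f] by simp
qed

lemma vNr_subring_idempotent_component:
  assumes "cancellative S m" and "graded_vNr S Rg" and e: "idempotent_in S m e"
  shows "vNr_subring (Rg e)"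
  unfolding vNr_subring_def
proof
  fix x assume x: "x \<in> Rg e"
  have eS: "e \<in> S" using e unfolding idempotent_in_def by simp
  obtain y where "x = x * y * x" using assms(2) eS x unfolding graded_vNr_def by blast
  then have "x = component e (x * y * x)"
    using component_homogeneous[OF eS x] by simp
  also have "\<dots> = x * component e y * x" using component_sandwich[OF assms(1) e x] .
  finally show "\<exists>y\<in>Rg e. x = x * y * x" using component_mem[OF eS] by blast
qed

end

theorem lemma4p3:
  fixes S :: "'s set" and m :: "'s \<Rightarrow> 's \<Rightarrow> 's option" and Rg :: "'s \<Rightarrow> 'r::ring set"
  assumes "graded_ring_inducing S m Rg"
    and "cancellative S m"
    and "graded_vNr S Rg"
  shows "\<forall>e. idempotent_in S m e \<longrightarrow> vNr_subring (Rg e)"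
  using graded_ring.vNr_subring_idempotent_component[OF graded_ring.intro[OF assms(1)] assms(2,3)]
  by blast

end
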